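(* Let $(X,d)$ be a compact metric space and $f_{1,\infty}$ a commutative $m$-periodic sequence of continuous surjective self-maps of $X$. If $(X,f_{1,\infty})$ is weakly mixing, then it is totally transitive.
   Context: Commutative: $f_i\circ f_j=f_j\circ f_i$ for all $i,j$. $m$-periodic: $f_{n+m}=f_n$ for all $n$. Write $f_1^n=f_n\circ\cdots\circ f_1$ and $f_{1,\infty}^{[k]}=\{f_{k(n-1)+1}^k\}_{n\ge1}$ with $f_n^i=f_{n+i-1}\circ\cdots\circ f_n$. Weakly mixing: for all non-empty open $U_1,U_2,V_1,V_2$ there is $n$ with $f_1^n(U_i)\cap V_i\ne\emptyset$, $i=1,2$. Topologically transitive: for all non-empty open $U,V$ some $n$ with $f_1^n(U)\cap V\ne\emptyset$. Totally transitive: $(X,f_{1,\infty}^{[k]})$ is topologically transitive for every $k\ge1$. *)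

theory Defs
  imports "HOL-Analysis.Analysis"
begin

text \<open>Non-autonomous systems: a sequence of maps f indexed from 1 (f 0 is ignored).
  comp_seg f i n = f (i+n-1) o ... o f i  (the identity for n = 0).\<close>

fun comp_seg :: "(nat \<Rightarrow> 'a \<Rightarrow> 'a) \<Rightarrow> nat \<Rightarrow> nat \<Rightarrow> 'a \<Rightarrow> 'a" where
  "comp_seg f i 0 = id"
| "comp_seg f i (Suc n) = f (i + n) \<circ> comp_seg f i n"

definition block_seq :: "nat \<Rightarrow> (nat \<Rightarrow> 'a \<Rightarrow> 'a) \<Rightarrow> nat \<Rightarrow> 'a \<Rightarrow> 'a" where
  "block_seq k f n = comp_seg f (k * (n - 1) + 1) k"

definition commutative_seq :: "'a set \<Rightarrow> (nat \<Rightarrow> 'a \<Rightarrow> 'a) \<Rightarrow> bool" where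
  "commutative_seq X f \<longleftrightarrow> (\<forall>i\<ge>1. \<forall>j\<ge>1. \<forall>x\<in>X. f i (f j x) = f j (f i x))"

definition periodic_seq :: "nat \<Rightarrow> (nat \<Rightarrow> 'a \<Rightarrow> 'a) \<Rightarrow> bool" where
  "periodic_seq m f \<longleftrightarrow> m \<ge> 1 \<and> (\<forall>n\<ge>1. f (n + m) = f n)"

definition topologically_transitive :: "'a::topological_space set \<Rightarrow> (nat \<Rightarrow> 'a \<Rightarrow> 'a) \<Rightarrow> bool" where
  "topologically_transitive X f \<longleftrightarrow>
     (\<forall>U V. openin (top_of_set X) U \<longrightarrow> U \<noteq> {} \<longrightarrow> openin (top_of_set X) V \<longrightarrow> V \<noteq> {} \<longrightarrow>
        (\<exists>n\<ge>1. comp_seg f 1 n ` U \<inter> V \<noteq> {}))"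

definition weakly_mixing :: "'a::topological_space set \<Rightarrow> (nat \<Rightarrow> 'a \<Rightarrow> 'a) \<Rightarrow> bool" where
  "weakly_mixing X f \<longleftrightarrow>
     (\<forall>U1 U2 V1 V2.
        openin (top_of_set X) U1 \<longrightarrow> U1 \<noteq> {} \<longrightarrow> openin (top_of_set X) U2 \<longrightarrow> U2 \<noteq> {} \<longrightarrow>
        openin (top_of_set X) V1 \<longrightarrow> V1 \<noteq> {} \<longrightarrow> openin (top_of_set X) V2 \<longrightarrow> V2 \<noteq> {} \<longrightarrow>
        (\<exists>n\<ge>1. comp_seg f 1 n ` U1 \<inter> V1 \<noteq> {} \<and> comp_seg f 1 n ` U2 \<inter> V2 \<noteq> {}))"

definition totally_transitive :: "'a::topological_space set \<Rightarrow> (nat \<Rightarrow> 'a \<Rightarrow> 'a) \<Rightarrow> bool" where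
  "totally_transitive X f \<longleftrightarrow> (\<forall>k\<ge>1. topologically_transitive X (block_seq k f))"

end

theory Submission
  imports Defs
begin

text \<open>Write N(U,V) for the set of hitting times n \<ge> 1 with f_1^n(U) \<inter> V \<noteq> {}.
  Commutativity and weak mixing give Furstenberg's filter property: for any two pairs of
  nonempty open sets there is a third pair with N(U_3,V_3) \<subseteq> N(U_1,V_1) \<inter> N(U_2,V_2);
  the third pair is U_3 = U_1 \<inter> f_1^{-n}(U_2), V_3 = V_1 \<inter> f_1^{-n}(V_2) for a common
  hitting time n of (U_1,U_2) and (V_1,V_2). Iterating, the sets N(U, A_r) with
  A_r = (f_{r+1}^{M-r})^{-1}(V), r < M, which are nonempty by surjectivity, have a common
  element n = qM + r, and by M-periodicity f_{r+1}^{M-r} \<circ> f_1^n = f_1^{(q+1)M}. So multiples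
  of any period hit V, and the block system of length k is transitive because k m is a period.\<close>

lemma comp_seg_add: "comp_seg f i (a + b) = comp_seg f (i + a) b \<circ> comp_seg f i a"
  by (induction b) (auto simp: add.assoc)

lemma periodic_mult:
  fixes f :: "nat \<Rightarrow> 'b"
  assumes "\<forall>n\<ge>1. f (n + M) = f n" "n \<ge> 1"
  shows "f (n + k * M) = f n"
proof (induction k)
  case (Suc k)
  have "f (n + Suc k * M) = f ((n + k * M) + M)" by (simp add: algebra_simps)
  also have "\<dots> = f (n + k * M)" using assms by simp
  finally show ?case using Suc by simp
qed simp

lemma comp_seg_shift_period:
  assumes "\<forall>n\<ge>1. f (n + M) = f n" "i \<ge> 1"
  shows "comp_seg f (i + M) n = comp_seg f i n"
proof (induction n)
  case (Suc n)
  have "f (i + M + n) = f (i + n)"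
    using assms by (metis add.commute add.left_commute le_add1 order_trans)
  then show ?case using Suc by simp
qed simp

lemma comp_seg_complete_period:
  assumes per: "\<forall>n\<ge>1. f (n + M) = f n" and "r < M"
  shows "comp_seg f (r + 1) (M - r) \<circ> comp_seg f 1 (q * M + r) = comp_seg f 1 (Suc q * M)"
proof -
  have per_q: "\<forall>n\<ge>1. f (n + q * M) = f n" using periodic_mult[OF per] by blast
  have "comp_seg f (r + 1) (M - r) \<circ> comp_seg f 1 (q * M + r)
      = comp_seg f (r + 1) (M - r) \<circ> comp_seg f 1 r \<circ> comp_seg f 1 (q * M)"
    using comp_seg_add[of f 1 "q * M" r] comp_seg_shift_period[OF per_q, of 1 r]
    by (simp add: add.commute comp_assoc)
  also have "\<dots> = comp_seg f 1 M \<circ> comp_seg f 1 (q * M)"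
    using comp_seg_add[of f 1 r "M - r"] \<open>r < M\<close> by (simp add: add.commute)
  also have "\<dots> = comp_seg f 1 (Suc q * M)"
    using comp_seg_add[of f 1 "q * M" M] comp_seg_shift_period[OF per_q, of 1 M]
    by (simp add: add.commute)
  finally show ?thesis .
qed

lemma comp_seg_block_seq: "comp_seg (block_seq k f) 1 n = comp_seg f 1 (k * n)"
proof (induction n)
  case (Suc n)
  have "comp_seg f 1 (k * n + k) = comp_seg f (1 + k * n) k \<circ> comp_seg f 1 (k * n)"
    by (rule comp_seg_add)
  then show ?case using Suc by (simp add: block_seq_def add.commute)
qed simp

lemma comp_seg_image_eq:
  assumes "\<And>n. n \<ge> 1 \<Longrightarrow> f n ` X = X" "i \<ge> 1"
  shows "comp_seg f i n ` X = X"
proof (induction n)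
  case (Suc n)
  have "comp_seg f i (Suc n) ` X = f (i + n) ` (comp_seg f i n ` X)"
    by (simp only: comp_seg.simps image_comp)
  also have "\<dots> = X" using Suc assms(1)[of "i + n"] assms(2) by simp
  finally show ?case .
qed simp

lemma comp_seg_in:
  assumes "\<And>n. n \<ge> 1 \<Longrightarrow> f n ` X \<subseteq> X" "i \<ge> 1" "x \<in> X"
  shows "comp_seg f i n x \<in> X"
proof (induction n)
  case (Suc n)
  then show ?case using assms(1)[of "i + n"] assms(2) by auto
qed (simp add: assms(3))

lemma comp_seg_continuous_on:
  assumes "\<And>n. n \<ge> 1 \<Longrightarrow> continuous_on X (f n)" "\<And>n. n \<ge> 1 \<Longrightarrow> f n ` X \<subseteq> X" "i \<ge> 1"
  shows "continuous_on X (comp_seg f i n)"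
proof (induction n)
  case (Suc n)
  have "comp_seg f i n ` X \<subseteq> X" using comp_seg_in[where f = f, OF assms(2,3)] by blast
  then have "continuous_on (comp_seg f i n ` X) (f (i + n))"
    using continuous_on_subset assms(1,3) le_add1 order_trans by metis
  then show ?case using continuous_on_compose[OF Suc] by simp
qed (simp add: continuous_on_id)

lemma comp_seg_commute:
  assumes comm: "commutative_seq X f" and into: "\<And>n. n \<ge> 1 \<Longrightarrow> f n ` X \<subseteq> X" and "x \<in> X"
  shows "comp_seg f 1 a (comp_seg f 1 b x) = comp_seg f 1 b (comp_seg f 1 a x)"
proof -
  have single: "f j (comp_seg f 1 n y) = comp_seg f 1 n (f j y)" if "j \<ge> 1" "y \<in> X" for j n y
  proof (induction n)
    case (Suc n)
    have "f j (f (1 + n) (comp_seg f 1 n y)) = f (1 + n) (f j (comp_seg f 1 n y))"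
      using comm comp_seg_in[where f = f and i = 1, OF into _ \<open>y \<in> X\<close>] \<open>j \<ge> 1\<close>
      unfolding commutative_seq_def by simp
    then show ?case using Suc by simp
  qed simp
  show ?thesis
  proof (induction a)
    case (Suc a)
    have "comp_seg f 1 a x \<in> X" using comp_seg_in[where f = f and i = 1, OF into _ \<open>x \<in> X\<close>] by simp
    then show ?case using single[of "1 + a" "comp_seg f 1 a x" b] Suc by simp
  qed simp
qed

definition hitting_times :: "(nat \<Rightarrow> 'a \<Rightarrow> 'a) \<Rightarrow> 'a set \<Rightarrow> 'a set \<Rightarrow> nat set" where
  "hitting_times f U V = {n. n \<ge> 1 \<and> comp_seg f 1 n ` U \<inter> V \<noteq> {}}"

abbreviation nonempty_openin :: "'a::topological_space set \<Rightarrow> 'a set \<Rightarrow> bool" where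
  "nonempty_openin X U \<equiv> openin (top_of_set X) U \<and> U \<noteq> {}"

context
  fixes X :: "'a::topological_space set" and f :: "nat \<Rightarrow> 'a \<Rightarrow> 'a"
  assumes cont: "\<And>n. n \<ge> 1 \<Longrightarrow> continuous_on X (f n)"
    and surj: "\<And>n. n \<ge> 1 \<Longrightarrow> f n ` X = X"
    and comm: "commutative_seq X f"
    and wm: "weakly_mixing X f"
begin

lemma openin_comp_seg_vimage:
  assumes "i \<ge> 1" "openin (top_of_set X) V"
  shows "openin (top_of_set X) (X \<inter> comp_seg f i n -` V)"
  using comp_seg_continuous_on[where f = f, OF cont equalityD1[OF surj] assms(1)]
    comp_seg_image_eq[where f = f, OF surj assms(1)] assms(2)
  by (intro continuous_openin_preimage) auto

lemma hitting_times_nonempty: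
  assumes "nonempty_openin X U" "nonempty_openin X V"
  shows "hitting_times f U V \<noteq> {}"
  using wm[unfolded weakly_mixing_def, rule_format, of U U V V] assms
  unfolding hitting_times_def by auto

lemma hitting_times_Int:
  assumes "nonempty_openin X U1" "nonempty_openin X V1" "nonempty_openin X U2" "nonempty_openin X V2"
  obtains U3 V3 where "nonempty_openin X U3" "nonempty_openin X V3"
    "hitting_times f U3 V3 \<subseteq> hitting_times f U1 V1 \<inter> hitting_times f U2 V2"
proof -
  obtain n where n: "n \<ge> 1" "comp_seg f 1 n ` U1 \<inter> U2 \<noteq> {}" "comp_seg f 1 n ` V1 \<inter> V2 \<noteq> {}"
    using wm[unfolded weakly_mixing_def, rule_format, of U1 V1 U2 V2] assms by blast
  define U3 where "U3 = U1 \<inter> (X \<inter> comp_seg f 1 n -` U2)"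
  define V3 where "V3 = V1 \<inter> (X \<inter> comp_seg f 1 n -` V2)"
  have sub: "U1 \<subseteq> X" "V1 \<subseteq> X" by (meson assms openin_imp_subset)+
  have "openin (top_of_set X) U3" "openin (top_of_set X) V3"
    unfolding U3_def V3_def using assms openin_comp_seg_vimage[of 1] by (simp_all add: openin_Int)
  moreover have "U3 \<noteq> {}" "V3 \<noteq> {}"
    unfolding U3_def V3_def using n(2,3) sub by blast+
  moreover have "hitting_times f U3 V3 \<subseteq> hitting_times f U1 V1 \<inter> hitting_times f U2 V2"
  proof
    fix p assume "p \<in> hitting_times f U3 V3"
    then obtain x where x: "p \<ge> 1" "x \<in> U3" "comp_seg f 1 p x \<in> V3"
      unfolding hitting_times_def by auto
    have "comp_seg f 1 n (comp_seg f 1 p x) \<in> V2" using x(3) unfolding V3_def by blast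
    moreover have "x \<in> X" using x(2) sub unfolding U3_def by blast
    ultimately have "comp_seg f 1 p (comp_seg f 1 n x) \<in> V2"
      using comp_seg_commute[where f = f, OF comm equalityD1[OF surj], of x p n] by simp
    then show "p \<in> hitting_times f U1 V1 \<inter> hitting_times f U2 V2"
      using x unfolding hitting_times_def U3_def V3_def by blast
  qed
  ultimately show ?thesis using that by simp
qed

lemma hitting_times_INT:
  fixes M :: nat
  assumes U: "nonempty_openin X U" and A: "\<forall>r<M. nonempty_openin X (A r)"
  obtains U' V' where "nonempty_openin X U'" "nonempty_openin X V'"
    "hitting_times f U' V' \<subseteq> (\<Inter>r<M. hitting_times f U (A r))"
proof -
  have "\<exists>U' V'. nonempty_openin X U' \<and> nonempty_openin X V' \<and>
      hitting_times f U' V' \<subseteq> (\<Inter>r<M. hitting_times f U (A r))"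
    using A
  proof (induction M)
    case 0
    show ?case using U by (intro exI[of _ U]) simp
  next
    case (Suc M)
    then obtain U3 V3 where UV3: "nonempty_openin X U3" "nonempty_openin X V3"
      "hitting_times f U3 V3 \<subseteq> (\<Inter>r<M. hitting_times f U (A r))"
      by (meson less_SucI)
    have "nonempty_openin X (A M)" using Suc.prems by simp
    then obtain U4 V4 where UV4: "nonempty_openin X U4" "nonempty_openin X V4"
      "hitting_times f U4 V4 \<subseteq> hitting_times f U3 V3 \<inter> hitting_times f U (A M)"
      by (rule hitting_times_Int[OF UV3(1,2) U])
    have "hitting_times f U4 V4 \<subseteq> (\<Inter>r<Suc M. hitting_times f U (A r))"
      using UV3(3) UV4(3) unfolding lessThan_Suc by blast
    then show ?case using UV4(1,2) by blast
  qed
  then show ?thesis using that by blast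
qed

lemma hitting_times_period_multiple:
  assumes per: "M \<ge> 1" "\<forall>n\<ge>1. f (n + M) = f n"
    and UV: "nonempty_openin X U" "nonempty_openin X V"
  shows "\<exists>q\<ge>1. comp_seg f 1 (q * M) ` U \<inter> V \<noteq> {}"
proof -
  define A where "A r = X \<inter> comp_seg f (r + 1) (M - r) -` V" for r
  have VX: "V \<subseteq> X" using UV by (meson openin_imp_subset)
  have "\<forall>r<M. nonempty_openin X (A r)"
  proof (intro allI impI conjI)
    fix r
    show "openin (top_of_set X) (A r)" unfolding A_def using UV by (intro openin_comp_seg_vimage) simp_all
    obtain y where "y \<in> V" using UV by blast
    moreover have "comp_seg f (r + 1) (M - r) ` X = X"
      using comp_seg_image_eq[where f = f, OF surj] by simp
    ultimately obtain x where "x \<in> X" "comp_seg f (r + 1) (M - r) x \<in> V"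
      using VX by (metis imageE in_mono)
    then show "A r \<noteq> {}" unfolding A_def by blast
  qed
  then obtain U' V' where UV': "nonempty_openin X U'" "nonempty_openin X V'"
    "hitting_times f U' V' \<subseteq> (\<Inter>r<M. hitting_times f U (A r))"
    by (rule hitting_times_INT[OF UV(1)])
  obtain n where "n \<in> hitting_times f U' V'" using hitting_times_nonempty[OF UV'(1,2)] by blast
  moreover have r: "n mod M < M" using per by simp
  ultimately obtain x where x: "x \<in> U" "comp_seg f 1 n x \<in> A (n mod M)"
    using UV'(3) unfolding hitting_times_def by blast
  have "comp_seg f (n mod M + 1) (M - n mod M) (comp_seg f 1 n x)
      = comp_seg f 1 (Suc (n div M) * M) x"
    using fun_cong[OF comp_seg_complete_period[OF per(2) r, of "n div M"], of x] by simp
  then have "comp_seg f 1 (Suc (n div M) * M) x \<in> V" using x(2) unfolding A_def by simp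
  then show ?thesis using x(1) by (intro exI[of _ "Suc (n div M)"]) auto
qed

end

theorem mainTheorem13:
  fixes X :: "'a::metric_space set" and f :: "nat \<Rightarrow> 'a \<Rightarrow> 'a" and m :: nat
  assumes "compact X"
    and "\<And>n. n \<ge> 1 \<Longrightarrow> continuous_on X (f n)"
    and "\<And>n. n \<ge> 1 \<Longrightarrow> f n ` X = X"
    and "commutative_seq X f"
    and "periodic_seq m f"
    and "weakly_mixing X f"
  shows "totally_transitive X f"
  unfolding totally_transitive_def topologically_transitive_def
proof (intro allI impI)
  fix k :: nat and U V
  assume "k \<ge> 1" "openin (top_of_set X) U" "U \<noteq> {}" "openin (top_of_set X) V" "V \<noteq> {}"
  moreover have m: "m \<ge> 1" "\<forall>n\<ge>1. f (n + m) = f n"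
    using assms(5) unfolding periodic_seq_def by auto
  moreover have "\<forall>n\<ge>1. f (n + k * m) = f n" using periodic_mult[OF m(2)] by blast
  ultimately obtain q where "q \<ge> 1" "comp_seg f 1 (q * (k * m)) ` U \<inter> V \<noteq> {}"
    using hitting_times_period_multiple[where X = X and f = f, OF assms(2,3,4,6), of "k * m" U V]
    by auto
  moreover have "comp_seg (block_seq k f) 1 (q * m) = comp_seg f 1 (q * (k * m))"
    unfolding comp_seg_block_seq by (simp add: mult.left_commute)
  moreover have "q * m \<ge> 1" using \<open>q \<ge> 1\<close> m(1) by simp
  ultimately show "\<exists>n\<ge>1. comp_seg (block_seq k f) 1 n ` U \<inter> V \<noteq> {}"
    by (intro exI[of _ "q * m"]) simp
qed

end
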